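(* Let $G$ be an abelian group and let $(a_n)_{n\in\omega}$ be a $T$-sequence in $G$ such that $\{a_n:n\in\omega\}$ generates $G$. Then the coarse group $(G,\mathcal{C}_{\tau(a_n)})$ is asymorphic to the Cayley graph $\mathrm{Cay}(G,\{a_n:n\in\omega\})$ endowed with its path metric.
   Context: A sequence $(a_n)$ in an abelian group $G$ is a $T$-sequence if there is a Hausdorff group topology on $G$ in which $(a_n)\to 0$; $\tau(a_n)$ is the strongest group topology on $G$ in which $(a_n)\to0$, and $\mathcal{C}_{\tau(a_n)}$ is the family of precompact subsets of $(G,\tau(a_n))$. A coarse structure on a set $X$ is a family $\mathcal{E}$ of subsets of $X\times X$, each containing the diagonal, closed under composition, inversion, taking subsets containing the diagonal, and such that every pair $(x,y)$ lies in some member. For $E\in\mathcal{E}$, $E[x]=\{y:(x,y)\in E\}$. A group ideal $\mathcal{I}$ on $G$ (a family of subsets containing all finite sets, closed under subsets and under $(A,B)\mapsto A-B$) defines the coarse structure on $G$ with base $\{\{(x,y):x\in A+y\}:A\in\mathcal{I}\}$; $(G,\mathcal{I})$ denotes $G$ with this coarse structure. A metric space is regarded as a coarse space with base of entourages $\{(x,y):d(x,y)\le r\}$, $r\ge0$. For $S\subseteq G$, $\mathrm{Cay}(G,S)$ is the graph with vertex set $G$ and edges $\{(x,y): x-y\in S\cup(-S)\}$. A map $f$ between coarse spaces $(X,\mathcal{E})$, $(X',\mathcal{E}')$ is macro-uniform if for every $E\in\mathcal{E}$ there is $E'\in\mathcal{E}'$ with $f(E[x])\subseteq E'[f(x)]$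 for all $x$; an asymorphism is a bijection $f$ with $f$ and $f^{-1}$ macro-uniform. *)

theory Defs
  imports "HOL-Analysis.Analysis"
begin

definition group_topology :: "'a::ab_group_add topology \<Rightarrow> bool" where
  "group_topology T \<longleftrightarrow> topspace T = UNIV
     \<and> continuous_map (prod_topology T T) T (\<lambda>(x, y). x + y)
     \<and> continuous_map T T uminus"

definition T_sequence :: "(nat \<Rightarrow> 'a::ab_group_add) \<Rightarrow> bool" where
  "T_sequence a \<longleftrightarrow> (\<exists>T. group_topology T \<and> Hausdorff_space T \<and> limitin T a 0 sequentially)"

definition tau_seq :: "(nat \<Rightarrow> 'a::ab_group_add) \<Rightarrow> 'a topology" where
  "tau_seq a = (THE T. group_topology T \<and> limitin T a 0 sequentially
      \<and> (\<forall>T'. group_topology T' \<and> limitin T' a 0 sequentially \<longrightarrow>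
              (\<forall>U. openin T' U \<longrightarrow> openin T U)))"

definition precompact_in :: "'a::ab_group_add topology \<Rightarrow> 'a set \<Rightarrow> bool" where
  "precompact_in T A \<longleftrightarrow> (\<forall>U. openin T U \<and> 0 \<in> U \<longrightarrow>
      (\<exists>F. finite F \<and> A \<subseteq> {f + u | f u. f \<in> F \<and> u \<in> U}))"

definition precompacts :: "'a::ab_group_add topology \<Rightarrow> 'a set set" where
  "precompacts T = {A. precompact_in T A}"

definition ideal_coarse :: "'a::ab_group_add set set \<Rightarrow> ('a \<times> 'a) set set" where
  "ideal_coarse I = {E. Id \<subseteq> E \<and> (\<exists>A\<in>I. E \<subseteq> {(x, y). x \<in> (\<lambda>z. z + y) ` A})}"

definition cay_edge :: "'a::ab_group_add set \<Rightarrow> 'a \<Rightarrow> 'a \<Rightarrow> bool" where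
  "cay_edge S x y \<longleftrightarrow> x - y \<in> S \<union> uminus ` S"

definition cay_dist :: "'a::ab_group_add set \<Rightarrow> 'a \<Rightarrow> 'a \<Rightarrow> nat" where
  "cay_dist S x y = (LEAST n. \<exists>p. length p = Suc n \<and> hd p = x \<and> last p = y
       \<and> (\<forall>i<n. cay_edge S (p ! i) (p ! Suc i)))"

definition metric_coarse :: "('a \<Rightarrow> 'a \<Rightarrow> real) \<Rightarrow> ('a \<times> 'a) set set" where
  "metric_coarse d = {E. Id \<subseteq> E \<and> (\<exists>r\<ge>0. E \<subseteq> {(x, y). d x y \<le> r})}"

definition macro_uniform :: "('a \<times> 'a) set set \<Rightarrow> ('b \<times> 'b) set set \<Rightarrow> ('a \<Rightarrow> 'b) \<Rightarrow> bool" where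
  "macro_uniform \<E> \<E>' f \<longleftrightarrow> (\<forall>E\<in>\<E>. \<exists>E'\<in>\<E>'. \<forall>x. f ` (E `` {x}) \<subseteq> E' `` {f x})"

definition asymorphism :: "('a \<times> 'a) set set \<Rightarrow> ('b \<times> 'b) set set \<Rightarrow> ('a \<Rightarrow> 'b) \<Rightarrow> bool" where
  "asymorphism \<E> \<E>' f \<longleftrightarrow> bij f \<and> macro_uniform \<E> \<E>' f \<and> macro_uniform \<E>' \<E> (inv f)"

definition asymorphic :: "('a \<times> 'a) set set \<Rightarrow> ('b \<times> 'b) set set \<Rightarrow> bool" where
  "asymorphic \<E> \<E>' \<longleftrightarrow> (\<exists>f. asymorphism \<E> \<E>' f)"

definition add_subgroup :: "'a::ab_group_add set \<Rightarrow> bool" where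
  "add_subgroup H \<longleftrightarrow> 0 \<in> H \<and> (\<forall>x\<in>H. \<forall>y\<in>H. x - y \<in> H)"

definition gen_subgroup :: "'a::ab_group_add set \<Rightarrow> 'a set" where
  "gen_subgroup S = \<Inter>{H. add_subgroup H \<and> S \<subseteq> H}"

end

theory Submission
  imports Defs "HOL-Library.Set_Algebras"
begin

text \<open>
  By Protasov and Zelenyuk, the sets \<open>U(n) = \<Union>k. A(n 0) + \<dots> + A(n (k - 1))\<close> (\<open>seq_nbhd a n\<close>),
  where \<open>A m = {0} \<union> {\<plusminus>a i | i \<ge> m}\<close> (\<open>sym_tail a m\<close>) and \<open>n\<close> ranges over all functions
  \<open>\<nat> \<Rightarrow> \<nat>\<close>, form a neighbourhood base at \<open>0\<close> of \<open>\<tau>(a\<^sub>n)\<close>. The ball of radius \<open>k\<close> about \<open>0\<close> in the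
  Cayley graph is \<open>A 0 + \<dots> + A 0\<close> with \<open>k\<close> summands (\<open>word_ball a k\<close>), so both coarse structures are generated by translation
  invariant entourages and it suffices to show that a set is precompact iff it lies in a ball.
  A ball is covered by finitely many translates of \<open>A(n 0) + \<dots> + A(n (k - 1))\<close>, because each
  \<open>A 0\<close> differs from \<open>A m\<close> by finitely many elements. Conversely, if a precompact set \<open>A\<close> meets
  the complement of every ball, pick \<open>x\<^sub>k \<in> A\<close> outside the ball of radius \<open>2k\<close>. That ball is
  compact in a Hausdorff group topology in which \<open>a\<^sub>n \<rightarrow> 0\<close>, hence closed, which yields \<open>U(N k)\<close>
  with \<open>x\<^sub>k \<notin> ball(2k) + U(N k)\<close>; a diagonal \<open>n\<close> dominating all shifted \<open>N k\<close> then gives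
  \<open>x\<^sub>k \<notin> ball(k) + U(n)\<close> for every \<open>k\<close>, contradicting \<open>A \<subseteq> F + U(n)\<close> with \<open>F\<close> finite.
\<close>

section \<open>Tail sums of a sequence\<close>

definition sym_tail :: "(nat \<Rightarrow> 'a::ab_group_add) \<Rightarrow> nat \<Rightarrow> 'a set" where
  "sym_tail a m = insert 0 (a ` {m..} \<union> uminus ` a ` {m..})"

definition tail_sum :: "(nat \<Rightarrow> 'a::ab_group_add) \<Rightarrow> (nat \<Rightarrow> nat) \<Rightarrow> nat \<Rightarrow> 'a set" where
  "tail_sum a n k = (\<Sum>i<k. sym_tail a (n i))"

definition seq_nbhd :: "(nat \<Rightarrow> 'a::ab_group_add) \<Rightarrow> (nat \<Rightarrow> nat) \<Rightarrow> 'a set" where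
  "seq_nbhd a n = (\<Union>k. tail_sum a n k)"

definition word_ball :: "(nat \<Rightarrow> 'a::ab_group_add) \<Rightarrow> nat \<Rightarrow> 'a set" where
  "word_ball a k = tail_sum a (\<lambda>_. 0) k"

lemma zero_in_sym_tail [simp]: "0 \<in> sym_tail a m"
  by (simp add: sym_tail_def)

lemma uminus_in_sym_tail: "x \<in> sym_tail a m \<Longrightarrow> - x \<in> sym_tail a m"
  by (auto simp: sym_tail_def)

lemma sym_tail_antimono: "m \<le> m' \<Longrightarrow> sym_tail a m' \<subseteq> sym_tail a m"
  by (auto simp: sym_tail_def)

lemma sym_tail_0: "sym_tail a 0 = insert 0 (range a \<union> uminus ` range a)"
  by (simp add: sym_tail_def)

lemma tail_sum_0 [simp]: "tail_sum a n 0 = {0}"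
  by (simp add: tail_sum_def)

lemma tail_sum_Suc [simp]: "tail_sum a n (Suc k) = tail_sum a n k + sym_tail a (n k)"
  by (simp add: tail_sum_def)

lemma zero_in_tail_sum [simp]: "0 \<in> tail_sum a n k"
proof (induction k)
  case (Suc k)
  show ?case
    using set_plus_intro[OF Suc zero_in_sym_tail] by simp
qed simp

lemma tail_sum_Suc_mono: "tail_sum a n k \<subseteq> tail_sum a n (Suc k)"
  using set_zero_plus2[of "sym_tail a (n k)" "tail_sum a n k"] by (simp add: add.commute)

lemma tail_sum_mono: "k \<le> l \<Longrightarrow> tail_sum a n k \<subseteq> tail_sum a n l"
  by (induction l rule: dec_induct) (use tail_sum_Suc_mono in blast)+

lemma tail_sum_antimono: "(\<And>i. n i \<le> m i) \<Longrightarrow> tail_sum a m k \<subseteq> tail_sum a n k"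
  by (induction k) (simp_all add: set_plus_mono2 sym_tail_antimono)

lemma uminus_in_tail_sum: "x \<in> tail_sum a n k \<Longrightarrow> - x \<in> tail_sum a n k"
proof (induction k arbitrary: x)
  case (Suc k)
  then obtain y s where "x = y + s" and y: "y \<in> tail_sum a n k" and s: "s \<in> sym_tail a (n k)"
    by (auto elim: set_plus_elim)
  have "- y + - s \<in> tail_sum a n (Suc k)"
    using set_plus_intro[OF Suc.IH[OF y] uminus_in_sym_tail[OF s]] by simp
  then show ?case
    using \<open>x = y + s\<close> by (simp only: minus_add_distrib)
qed simp

lemma tail_sum_add: "tail_sum a n (k + l) = tail_sum a n k + tail_sum a (\<lambda>i. n (k + i)) l"
  by (induction l) (simp_all add: add.assoc)

lemma tail_sum_subset_word_ball: "tail_sum a n k \<subseteq> word_ball a k"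
  unfolding word_ball_def by (rule tail_sum_antimono) simp

lemma word_ball_mono: "j \<le> k \<Longrightarrow> word_ball a j \<subseteq> word_ball a k"
  unfolding word_ball_def by (rule tail_sum_mono)

lemma word_ball_Suc: "word_ball a (Suc k) = word_ball a k + sym_tail a 0"
  by (simp add: word_ball_def)

lemma word_ball_add: "word_ball a j + word_ball a k = word_ball a (j + k)"
  by (simp add: word_ball_def tail_sum_add)

lemma tail_sum_double:
  assumes "\<And>i. n (2*i) \<le> m i" and "\<And>i. n (Suc (2*i)) \<le> m i"
  shows "tail_sum a m k + tail_sum a m k \<subseteq> tail_sum a n (2*k)"
proof (induction k)
  case (Suc k)
  have "tail_sum a m (Suc k) + tail_sum a m (Suc k)
      = (tail_sum a m k + tail_sum a m k) + sym_tail a (m k) + sym_tail a (m k)"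
    by (simp only: tail_sum_Suc ac_simps)
  also have "\<dots> \<subseteq> tail_sum a n (2*k) + sym_tail a (n (2*k)) + sym_tail a (n (Suc (2*k)))"
    by (intro set_plus_mono2 Suc.IH sym_tail_antimono assms)
  also have "\<dots> = tail_sum a n (2 * Suc k)"
    by (simp only: tail_sum_Suc mult_Suc_right add_2_eq_Suc)
  finally show ?case .
qed simp

lemma zero_in_seq_nbhd [simp]: "0 \<in> seq_nbhd a n"
  by (simp add: seq_nbhd_def)

lemma uminus_in_seq_nbhd: "x \<in> seq_nbhd a n \<Longrightarrow> - x \<in> seq_nbhd a n"
  by (auto simp: seq_nbhd_def intro: uminus_in_tail_sum)

lemma seq_nbhd_antimono: "(\<And>i. n i \<le> m i) \<Longrightarrow> seq_nbhd a m \<subseteq> seq_nbhd a n"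
  unfolding seq_nbhd_def by (intro UN_mono tail_sum_antimono) auto

lemma seq_nbhd_half: "\<exists>m. seq_nbhd a m + seq_nbhd a m \<subseteq> seq_nbhd a n"
proof (intro exI subsetI)
  let ?m = "\<lambda>i. max (n (2*i)) (n (Suc (2*i)))"
  fix z assume "z \<in> seq_nbhd a ?m + seq_nbhd a ?m"
  then obtain k l where "z \<in> tail_sum a ?m k + tail_sum a ?m l"
    unfolding seq_nbhd_def by (blast elim: set_plus_elim)
  moreover have "tail_sum a ?m k + tail_sum a ?m l \<subseteq> tail_sum a ?m (max k l) + tail_sum a ?m (max k l)"
    by (intro set_plus_mono2 tail_sum_mono) simp_all
  ultimately have "z \<in> tail_sum a n (2 * max k l)"
    using tail_sum_double[of n ?m] by auto
  then show "z \<in> seq_nbhd a n"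
    unfolding seq_nbhd_def by blast
qed

lemma seq_nbhd_translate: "y \<in> seq_nbhd a n \<Longrightarrow> \<exists>m. y +o seq_nbhd a m \<subseteq> seq_nbhd a n"
proof -
  assume "y \<in> seq_nbhd a n"
  then obtain k where y: "y \<in> tail_sum a n k"
    by (auto simp: seq_nbhd_def)
  have "y +o tail_sum a (\<lambda>i. n (k + i)) l \<subseteq> tail_sum a n (k + l)" for l
    unfolding tail_sum_add by (rule set_plus_mono5[OF y order.refl])
  then have "y +o seq_nbhd a (\<lambda>i. n (k + i)) \<subseteq> seq_nbhd a n"
    unfolding seq_nbhd_def elt_set_plus_def by blast
  then show ?thesis
    by blast
qed

section \<open>Group topologies\<close>

lemma group_topology_topspace: "group_topology T \<Longrightarrow> topspace T = UNIV"
  by (simp add: group_topology_def)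

lemma group_topology_add: "group_topology T \<Longrightarrow> continuous_map (prod_topology T T) T (\<lambda>(x, y). x + y)"
  by (simp add: group_topology_def)

lemma group_topology_uminus: "group_topology T \<Longrightarrow> continuous_map T T uminus"
  by (simp add: group_topology_def)

lemma group_topology_translation:
  assumes "group_topology T"
  shows "continuous_map T T (\<lambda>z. c + z)"
proof -
  have "continuous_map T (prod_topology T T) (\<lambda>z. (c, z))"
    by (intro continuous_map_pairedI) (auto simp: assms group_topology_topspace)
  from continuous_map_compose[OF this group_topology_add[OF assms]] show ?thesis
    by (simp add: o_def)
qed

lemma group_topology_openin_vimage:
  "group_topology T \<Longrightarrow> continuous_map T T f \<Longrightarrow> openin T U \<Longrightarrow> openin T (f -` U)"
  using openin_continuous_map_preimage[of T T f U] by (simp add: group_topology_topspace vimage_def)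

lemma group_topology_half_nbhd:
  assumes T: "group_topology T" and U: "openin T U" "0 \<in> U"
  shows "\<exists>W. openin T W \<and> 0 \<in> W \<and> W + W \<subseteq> U"
proof -
  have "openin (prod_topology T T) {p \<in> topspace (prod_topology T T). (\<lambda>(x, y). x + y) p \<in> U}"
    using openin_continuous_map_preimage[OF group_topology_add[OF T] U(1)] .
  then have "openin (prod_topology T T) {p. fst p + snd p \<in> U}"
    by (simp add: group_topology_topspace[OF T] case_prod_beta)
  moreover have "(0, 0) \<in> {p. fst p + snd p \<in> U}"
    using U(2) by simp
  ultimately have "\<exists>V V'. openin T V \<and> openin T V' \<and> 0 \<in> V \<and> 0 \<in> V' \<and> V \<times> V' \<subseteq> {p. fst p + snd p \<in> U}"
    by (rule openin_prod_topology_alt[THEN iffD1, rule_format])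
  then obtain V V' where VV': "openin T V" "openin T V'" "0 \<in> V" "0 \<in> V'"
      and sum: "V \<times> V' \<subseteq> {p. fst p + snd p \<in> U}"
    by blast
  have "(V \<inter> V') + (V \<inter> V') \<subseteq> U"
  proof
    fix z assume "z \<in> (V \<inter> V') + (V \<inter> V')"
    then obtain x y where "z = x + y" "x \<in> V" "y \<in> V'"
      by (blast elim: set_plus_elim)
    then show "z \<in> U"
      using sum by auto
  qed
  then show ?thesis
    using VV' by (intro exI[of _ "V \<inter> V'"]) auto
qed

lemma limitin_sym_tail_subset:
  assumes T: "group_topology T" and lim: "limitin T a 0 sequentially"
    and W: "openin T W" "0 \<in> W"
  shows "\<exists>m. sym_tail a m \<subseteq> W"
proof -
  have "openin T (W \<inter> uminus -` W)"
    using W(1) group_topology_openin_vimage[OF T group_topology_uminus[OF T] W(1)] by blast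
  moreover have "0 \<in> W \<inter> uminus -` W"
    using W(2) by simp
  ultimately obtain N where "\<forall>n\<ge>N. a n \<in> W \<inter> uminus -` W"
    using lim unfolding limitin_sequentially by blast
  then show ?thesis
    using W(2) by (intro exI[of _ N]) (auto simp: sym_tail_def)
qed

lemma tail_sum_subset_chain:
  assumes zero: "\<And>i. 0 \<in> V i" and half: "\<And>i. V (Suc i) + V (Suc i) \<subseteq> V i"
    and tail: "\<And>i. sym_tail a (m i) \<subseteq> V (Suc i)"
  shows "tail_sum a m l \<subseteq> V 0"
proof -
  have "tail_sum a m l + V l \<subseteq> V 0"
  proof (induction l)
    case (Suc l)
    have "tail_sum a m (Suc l) + V (Suc l) = tail_sum a m l + (sym_tail a (m l) + V (Suc l))"
      by (simp add: add.assoc)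
    also have "\<dots> \<subseteq> tail_sum a m l + V l"
      using order_trans[OF set_plus_mono2[OF tail order.refl] half] by (rule set_plus_mono2[OF order.refl])
    finally show ?case
      using Suc.IH by blast
  qed simp
  then show ?thesis
    using set_zero_plus2[OF zero, of "tail_sum a m l" l] by (simp add: add.commute)
qed

lemma limitin_seq_nbhd_subset:
  assumes T: "group_topology T" and lim: "limitin T a 0 sequentially"
    and U: "openin T U" "0 \<in> U"
  shows "\<exists>n. seq_nbhd a n \<subseteq> U"
proof -
  have "\<exists>V. \<forall>i. (openin T (V i) \<and> 0 \<in> V i \<and> V i \<subseteq> U) \<and> V (Suc i) + V (Suc i) \<subseteq> V i"
  proof (rule dependent_nat_choice)
    show "\<exists>W. openin T W \<and> 0 \<in> W \<and> W \<subseteq> U"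
      using U by blast
  next
    fix W and i :: nat
    assume W: "openin T W \<and> 0 \<in> W \<and> W \<subseteq> U"
    then obtain W' where W': "openin T W'" "0 \<in> W'" "W' + W' \<subseteq> W"
      using group_topology_half_nbhd[OF T, of W] by blast
    moreover have "W' \<subseteq> W' + W'"
      using set_zero_plus2[OF W'(2)] .
    ultimately show "\<exists>W'. (openin T W' \<and> 0 \<in> W' \<and> W' \<subseteq> U) \<and> W' + W' \<subseteq> W"
      using W by blast
  qed
  then obtain V where V: "\<And>i. openin T (V i) \<and> 0 \<in> V i \<and> V i \<subseteq> U" "\<And>i. V (Suc i) + V (Suc i) \<subseteq> V i"
    by metis
  have "\<forall>i. \<exists>m. sym_tail a m \<subseteq> V (Suc i)"
    using limitin_sym_tail_subset[OF T lim] V(1) by blast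
  then obtain m where "\<And>i. sym_tail a (m i) \<subseteq> V (Suc i)"
    by metis
  then have "tail_sum a m l \<subseteq> V 0" for l
    using V by (intro tail_sum_subset_chain) auto
  then show ?thesis
    using V(1)[of 0] unfolding seq_nbhd_def by blast
qed

section \<open>The topology \<open>\<tau>(a\<^sub>n)\<close>\<close>

definition seq_topology :: "(nat \<Rightarrow> 'a::ab_group_add) \<Rightarrow> 'a topology" where
  "seq_topology a = topology (\<lambda>U. \<forall>x\<in>U. \<exists>n. x +o seq_nbhd a n \<subseteq> U)"

lemma istopology_seq_nbhds: "istopology (\<lambda>U. \<forall>x\<in>U. \<exists>n. x +o seq_nbhd a n \<subseteq> U)"
  unfolding istopology_def
proof (intro conjI allI impI ballI)
  fix U V x
  assume U: "\<forall>x\<in>U. \<exists>n. x +o seq_nbhd a n \<subseteq> U" and V: "\<forall>x\<in>V. \<exists>n. x +o seq_nbhd a n \<subseteq> V"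
    and x: "x \<in> U \<inter> V"
  then obtain n n' where "x +o seq_nbhd a n \<subseteq> U" "x +o seq_nbhd a n' \<subseteq> V"
    by blast
  moreover have "seq_nbhd a (\<lambda>i. max (n i) (n' i)) \<subseteq> seq_nbhd a n \<inter> seq_nbhd a n'"
    using seq_nbhd_antimono[of n "\<lambda>i. max (n i) (n' i)"] seq_nbhd_antimono[of n' "\<lambda>i. max (n i) (n' i)"]
    by auto
  ultimately have "x +o seq_nbhd a (\<lambda>i. max (n i) (n' i)) \<subseteq> U \<inter> V"
    by (meson le_inf_iff set_plus_mono order_trans)
  then show "\<exists>n. x +o seq_nbhd a n \<subseteq> U \<inter> V"
    by blast
next
  fix \<K> x
  assume "\<forall>K\<in>\<K>. \<forall>x\<in>K. \<exists>n. x +o seq_nbhd a n \<subseteq> K" and "x \<in> \<Union>\<K>"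
  then show "\<exists>n. x +o seq_nbhd a n \<subseteq> \<Union>\<K>"
    by (meson Union_iff Union_upper order_trans)
qed

lemma openin_seq_topology: "openin (seq_topology a) U \<longleftrightarrow> (\<forall>x\<in>U. \<exists>n. x +o seq_nbhd a n \<subseteq> U)"
  unfolding seq_topology_def topology_inverse'[OF istopology_seq_nbhds] ..

lemma topspace_seq_topology: "topspace (seq_topology a) = UNIV"
  using openin_subset[of "seq_topology a" UNIV] by (auto simp: openin_seq_topology)

lemma openin_seq_topology_translate: "openin (seq_topology a) (c +o seq_nbhd a n)"
  unfolding openin_seq_topology
proof
  fix x assume "x \<in> c +o seq_nbhd a n"
  then obtain y where y: "x = c + y" "y \<in> seq_nbhd a n"
    by (auto simp: elt_set_plus_def)
  obtain m where "y +o seq_nbhd a m \<subseteq> seq_nbhd a n"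
    using seq_nbhd_translate[OF y(2)] by blast
  then have "x +o seq_nbhd a m \<subseteq> c +o seq_nbhd a n"
    using y(1) set_plus_rearrange2[of c y] by (metis set_plus_mono)
  then show "\<exists>m. x +o seq_nbhd a m \<subseteq> c +o seq_nbhd a n"
    by blast
qed

lemma self_in_translate_seq_nbhd: "x \<in> x +o seq_nbhd a n"
  using set_plus_intro2[of 0 "seq_nbhd a n" x] by simp

lemma continuous_map_seq_topology_uminus: "continuous_map (seq_topology a) (seq_topology a) uminus"
  unfolding continuous_map_def topspace_seq_topology
proof (intro conjI allI impI)
  fix U assume U: "openin (seq_topology a) U"
  have "\<exists>n. x +o seq_nbhd a n \<subseteq> {x \<in> UNIV. - x \<in> U}" if x: "- x \<in> U" for x
  proof -
    obtain n where n: "(- x) +o seq_nbhd a n \<subseteq> U"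
      using U[unfolded openin_seq_topology, rule_format, OF x] ..
    have "- z \<in> (- x) +o seq_nbhd a n" if "z \<in> x +o seq_nbhd a n" for z
      using uminus_in_seq_nbhd[OF set_plus_imp_minus[OF that]] by (simp add: set_minus_plus[symmetric])
    then show ?thesis
      using n by blast
  qed
  then show "openin (seq_topology a) {x \<in> UNIV. - x \<in> U}"
    unfolding openin_seq_topology by blast
qed simp

lemma continuous_map_seq_topology_add:
  "continuous_map (prod_topology (seq_topology a) (seq_topology a)) (seq_topology a) (\<lambda>(x, y). x + y)"
  unfolding continuous_map_def topspace_seq_topology topspace_prod_topology
proof (intro conjI allI impI)
  fix U assume U: "openin (seq_topology a) U"
  let ?S = "{p \<in> UNIV \<times> UNIV. (case p of (x, y) \<Rightarrow> x + y) \<in> U}"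
  show "openin (prod_topology (seq_topology a) (seq_topology a)) ?S"
    unfolding openin_prod_topology_alt
  proof (intro allI impI)
    fix x y assume "(x, y) \<in> ?S"
    then obtain n where n: "(x + y) +o seq_nbhd a n \<subseteq> U"
      using U unfolding openin_seq_topology by auto
    obtain m where m: "seq_nbhd a m + seq_nbhd a m \<subseteq> seq_nbhd a n"
      using seq_nbhd_half by blast
    have "(x +o seq_nbhd a m) \<times> (y +o seq_nbhd a m) \<subseteq> ?S"
    proof
      fix p assume "p \<in> (x +o seq_nbhd a m) \<times> (y +o seq_nbhd a m)"
      then obtain u v where p: "p = (u, v)" and u: "u \<in> x +o seq_nbhd a m" and v: "v \<in> y +o seq_nbhd a m"
        by (rule SigmaE)
      from u v have "u + v \<in> (x +o seq_nbhd a m) + (y +o seq_nbhd a m)"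
        by (rule set_plus_intro)
      then have "u + v \<in> (x + y) +o (seq_nbhd a m + seq_nbhd a m)"
        by (simp only: set_plus_rearrange)
      then show "p \<in> ?S"
        using set_plus_mono[OF m, of "x + y"] n p by auto
    qed
    then show "\<exists>V V'. openin (seq_topology a) V \<and> openin (seq_topology a) V' \<and> x \<in> V \<and> y \<in> V' \<and> V \<times> V' \<subseteq> ?S"
      using openin_seq_topology_translate self_in_translate_seq_nbhd
      by (intro exI[of _ "x +o seq_nbhd a m"] exI[of _ "y +o seq_nbhd a m"] conjI) assumption+
  qed
qed simp

lemma group_topology_seq_topology: "group_topology (seq_topology a)"
  unfolding group_topology_def
  using topspace_seq_topology continuous_map_seq_topology_uminus continuous_map_seq_topology_add
  by (intro conjI)

lemma limitin_seq_topology: "limitin (seq_topology a) a 0 sequentially"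
  unfolding limitin_sequentially topspace_seq_topology
proof (intro conjI allI impI)
  fix U assume "openin (seq_topology a) U \<and> 0 \<in> U"
  then obtain n where n: "seq_nbhd a n \<subseteq> U"
    unfolding openin_seq_topology by (metis set_zero_plus)
  have "a m \<in> seq_nbhd a n" if "n 0 \<le> m" for m
  proof -
    have "a m \<in> sym_tail a (n 0)"
      using that by (simp add: sym_tail_def)
    then have "a m \<in> tail_sum a n (Suc 0)"
      using set_plus_intro[of 0 "{0}" "a m" "sym_tail a (n 0)"] by simp
    then show ?thesis
      unfolding seq_nbhd_def by blast
  qed
  then show "\<exists>N. \<forall>m\<ge>N. a m \<in> U"
    using n by blast
qed simp

lemma seq_topology_finer:
  assumes T: "group_topology T" and lim: "limitin T a 0 sequentially" and U: "openin T U"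
  shows "openin (seq_topology a) U"
  unfolding openin_seq_topology
proof
  fix x assume "x \<in> U"
  then have "openin T ((\<lambda>z. x + z) -` U)" "0 \<in> (\<lambda>z. x + z) -` U"
    using group_topology_openin_vimage[OF T group_topology_translation[OF T] U] by auto
  then obtain n where "seq_nbhd a n \<subseteq> (\<lambda>z. x + z) -` U"
    using limitin_seq_nbhd_subset[OF T lim] by blast
  then show "\<exists>n. x +o seq_nbhd a n \<subseteq> U"
    by (auto simp: elt_set_plus_def)
qed

lemma tau_seq_eq_seq_topology: "tau_seq a = seq_topology a"
  unfolding tau_seq_def
proof (rule the_equality)
  show "group_topology (seq_topology a) \<and> limitin (seq_topology a) a 0 sequentially \<and>
    (\<forall>T. group_topology T \<and> limitin T a 0 sequentially \<longrightarrow> (\<forall>U. openin T U \<longrightarrow> openin (seq_topology a) U))"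
    using seq_topology_finer by (auto simp: group_topology_seq_topology limitin_seq_topology)
next
  fix T assume T: "group_topology T \<and> limitin T a 0 sequentially \<and>
    (\<forall>T'. group_topology T' \<and> limitin T' a 0 sequentially \<longrightarrow> (\<forall>U. openin T' U \<longrightarrow> openin T U))"
  show "T = seq_topology a"
  proof (rule topology_eq[THEN iffD2], intro allI iffI)
    fix U
    show "openin T U \<Longrightarrow> openin (seq_topology a) U"
      using T seq_topology_finer by meson
    show "openin (seq_topology a) U \<Longrightarrow> openin T U"
      using T group_topology_seq_topology limitin_seq_topology by meson
  qed
qed

section \<open>Walks in the Cayley graph\<close>

definition cay_walk :: "'a::ab_group_add set \<Rightarrow> 'a \<Rightarrow> 'a \<Rightarrow> nat \<Rightarrow> bool" where
  "cay_walk S x y n \<longleftrightarrow> (\<exists>p. length p = Suc n \<and> hd p = x \<and> last p = y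
       \<and> (\<forall>i<n. cay_edge S (p ! i) (p ! Suc i)))"

lemma cay_dist_eq_Least: "cay_dist S x y = (LEAST n. cay_walk S x y n)"
  unfolding cay_dist_def cay_walk_def ..

lemma cay_walk_0 [simp]: "cay_walk S x y 0 \<longleftrightarrow> x = y"
  by (auto simp: cay_walk_def length_Suc_conv)

lemma cay_walk_Suc: "cay_walk S x y (Suc n) \<longleftrightarrow> (\<exists>z. cay_edge S x z \<and> cay_walk S z y n)"
proof
  assume "cay_walk S x y (Suc n)"
  then obtain p where p: "length p = Suc (Suc n)" "hd p = x" "last p = y"
      and edges: "\<forall>i<Suc n. cay_edge S (p ! i) (p ! Suc i)"
    unfolding cay_walk_def by blast
  obtain q where "p = x # q"
    using p(1,2) by (cases p) auto
  with p(1) have q: "p = x # q" "q \<noteq> []"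
    by auto
  have "cay_edge S x (hd q)"
    using edges[rule_format, of 0] q by (simp add: hd_conv_nth)
  moreover have "cay_walk S (hd q) y n"
    unfolding cay_walk_def
  proof (intro exI conjI allI impI)
    show "length q = Suc n" "hd q = hd q" "last q = y"
      using p q by auto
    fix i assume "i < n"
    then show "cay_edge S (q ! i) (q ! Suc i)"
      using edges[rule_format, of "Suc i"] q by simp
  qed
  ultimately show "\<exists>z. cay_edge S x z \<and> cay_walk S z y n"
    by blast
next
  assume "\<exists>z. cay_edge S x z \<and> cay_walk S z y n"
  then obtain q where "cay_edge S x (hd q)" "length q = Suc n" "last q = y"
      "\<forall>i<n. cay_edge S (q ! i) (q ! Suc i)"
    unfolding cay_walk_def by blast
  then show "cay_walk S x y (Suc n)"
    unfolding cay_walk_def by (intro exI[of _ "x # q"]) (auto simp: hd_conv_nth nth_Cons split: nat.split)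
qed

lemma cay_walk_imp_word_ball: "cay_walk (range a) x y n \<Longrightarrow> x - y \<in> word_ball a n"
proof (induction n arbitrary: x)
  case (Suc n)
  then obtain z where "cay_edge (range a) x z" "cay_walk (range a) z y n"
    unfolding cay_walk_Suc by blast
  then have "z - y \<in> word_ball a n" "x - z \<in> sym_tail a 0"
    using Suc.IH by (auto simp: cay_edge_def sym_tail_0)
  then have "(z - y) + (x - z) \<in> word_ball a (Suc n)"
    unfolding word_ball_Suc by (rule set_plus_intro)
  then show ?case
    by simp
qed (simp add: word_ball_def)

lemma word_ball_imp_cay_walk: "x - y \<in> word_ball a k \<Longrightarrow> \<exists>n\<le>k. cay_walk (range a) x y n"
proof (induction k arbitrary: x)
  case 0
  then show ?case
    by (simp add: word_ball_def)
next
  case (Suc k)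
  then obtain u s where "x - y = u + s" "u \<in> word_ball a k" and s: "s \<in> sym_tail a 0"
    unfolding word_ball_Suc by (auto elim: set_plus_elim)
  then have "(x - s) - y \<in> word_ball a k"
    by (simp add: algebra_simps)
  then obtain n where n: "n \<le> k" "cay_walk (range a) (x - s) y n"
    using Suc.IH by blast
  show ?case
  proof (cases "s = 0")
    case True
    then show ?thesis
      using n by (intro exI[of _ n]) auto
  next
    case False
    then have "cay_edge (range a) x (x - s)"
      using s by (auto simp: cay_edge_def sym_tail_0)
    then have "cay_walk (range a) x y (Suc n)"
      using n(2) cay_walk_Suc by blast
    then show ?thesis
      using n(1) Suc_le_mono by blast
  qed
qed

lemma ex_word_ball:
  assumes "gen_subgroup (range a) = UNIV"
  shows "\<exists>k. x \<in> word_ball a k"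
proof -
  have "add_subgroup (\<Union>k. word_ball a k)"
    unfolding add_subgroup_def
  proof (intro conjI ballI)
    show "0 \<in> (\<Union>k. word_ball a k)"
      by (auto simp: word_ball_def)
    fix u v assume "u \<in> (\<Union>k. word_ball a k)" "v \<in> (\<Union>k. word_ball a k)"
    then obtain j k where "u \<in> word_ball a j" "- v \<in> word_ball a k"
      unfolding word_ball_def using uminus_in_tail_sum by blast
    then have "u + - v \<in> word_ball a (j + k)"
      unfolding word_ball_add[symmetric] by (rule set_plus_intro)
    then show "u - v \<in> (\<Union>k. word_ball a k)"
      by auto
  qed
  moreover have "range a \<subseteq> (\<Union>k. word_ball a k)"
  proof
    fix z assume "z \<in> range a"
    then have "0 + z \<in> word_ball a (Suc 0)"
      unfolding word_ball_Suc by (intro set_plus_intro) (auto simp: word_ball_def sym_tail_0)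
    then show "z \<in> (\<Union>k. word_ball a k)"
      by auto
  qed
  ultimately have "gen_subgroup (range a) \<subseteq> (\<Union>k. word_ball a k)"
    unfolding gen_subgroup_def by blast
  then show ?thesis
    using assms by blast
qed

lemma cay_dist_le_iff:
  assumes "gen_subgroup (range a) = UNIV"
  shows "cay_dist (range a) x y \<le> k \<longleftrightarrow> x - y \<in> word_ball a k"
proof
  obtain j where "x - y \<in> word_ball a j"
    using ex_word_ball[OF assms] by blast
  then have "\<exists>n. cay_walk (range a) x y n"
    using word_ball_imp_cay_walk by blast
  then have "x - y \<in> word_ball a (cay_dist (range a) x y)"
    unfolding cay_dist_eq_Least by (rule cay_walk_imp_word_ball[OF LeastI_ex])
  moreover assume "cay_dist (range a) x y \<le> k"
  ultimately show "x - y \<in> word_ball a k"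
    using word_ball_mono by blast
next
  assume "x - y \<in> word_ball a k"
  then obtain n where "n \<le> k" "cay_walk (range a) x y n"
    using word_ball_imp_cay_walk by blast
  then show "cay_dist (range a) x y \<le> k"
    unfolding cay_dist_eq_Least by (meson Least_le order_trans)
qed

section \<open>Precompact sets are the subsets of balls\<close>

lemma precompact_in_iff: "precompact_in T A \<longleftrightarrow> (\<forall>U. openin T U \<and> 0 \<in> U \<longrightarrow> (\<exists>F. finite F \<and> A \<subseteq> F + U))"
proof -
  have "{f + u |f u. f \<in> F \<and> u \<in> U} = F + U" for F U :: "'a set"
    by (auto simp: set_plus_def)
  then show ?thesis
    unfolding precompact_in_def by simp
qed

lemma sym_tail_0_subset: "sym_tail a 0 \<subseteq> insert 0 (a ` {..<m} \<union> uminus ` a ` {..<m}) + sym_tail a m"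
proof
  fix s assume "s \<in> sym_tail a 0"
  then consider "s \<in> insert 0 (a ` {..<m} \<union> uminus ` a ` {..<m})" | "s \<in> sym_tail a m"
    by (force simp: sym_tail_def not_less)
  then show "s \<in> insert 0 (a ` {..<m} \<union> uminus ` a ` {..<m}) + sym_tail a m"
    by cases (use set_plus_intro[of s _ 0] set_plus_intro[of 0 _ s] in auto)
qed

lemma word_ball_cover: "\<exists>F. finite F \<and> word_ball a k \<subseteq> F + tail_sum a n k"
proof (induction k)
  case 0
  show ?case
    by (intro exI[of _ "{0}"]) (simp add: word_ball_def)
next
  case (Suc k)
  then obtain F where F: "finite F" "word_ball a k \<subseteq> F + tail_sum a n k"
    by blast
  define C where "C = insert 0 (a ` {..<n k} \<union> uminus ` a ` {..<n k})"
  have "word_ball a (Suc k) \<subseteq> (F + tail_sum a n k) + (C + sym_tail a (n k))"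
    unfolding word_ball_Suc C_def by (intro set_plus_mono2 F(2) sym_tail_0_subset)
  also have "\<dots> = (F + C) + tail_sum a n (Suc k)"
    by (simp only: tail_sum_Suc ac_simps)
  finally show ?case
    using F(1) by (intro exI[of _ "F + C"]) (simp add: C_def finite_set_plus)
qed

lemma precompact_in_word_ball: "precompact_in (seq_topology a) (word_ball a k)"
  unfolding precompact_in_iff
proof (intro allI impI)
  fix U assume "openin (seq_topology a) U \<and> 0 \<in> U"
  then obtain n where n: "seq_nbhd a n \<subseteq> U"
    unfolding openin_seq_topology by (metis set_zero_plus)
  obtain F where "finite F" "word_ball a k \<subseteq> F + tail_sum a n k"
    using word_ball_cover by blast
  moreover have "tail_sum a n k \<subseteq> U"
    using n unfolding seq_nbhd_def by blast
  ultimately show "\<exists>F. finite F \<and> word_ball a k \<subseteq> F + U"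
    by (meson order_trans set_plus_mono2 order.refl)
qed

lemma compactin_set_plus:
  assumes "group_topology T" "compactin T K" "compactin T L"
  shows "compactin T (K + L)"
proof -
  have "compactin T ((\<lambda>(x, y). x + y) ` (K \<times> L))"
    using assms by (intro image_compactin[OF _ group_topology_add]) (simp_all add: compactin_Times)
  moreover have "(\<lambda>(x, y). x + y) ` (K \<times> L) = K + L"
    by (auto simp: set_plus_def)
  ultimately show ?thesis
    by simp
qed

lemma compactin_sym_tail:
  assumes T: "group_topology T" and lim: "limitin T a 0 sequentially"
  shows "compactin T (sym_tail a m)"
proof -
  have K: "compactin T (insert 0 (a ` {m..}))"
    using lim by (rule compactin_sequence_with_limit) (auto simp: group_topology_topspace[OF T])
  have "sym_tail a m = insert 0 (a ` {m..}) \<union> uminus ` insert 0 (a ` {m..})"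
    by (auto simp: sym_tail_def)
  then show ?thesis
    using compactin_Un[OF K image_compactin[OF K group_topology_uminus[OF T]]] by simp
qed

lemma compactin_tail_sum:
  assumes T: "group_topology T" and lim: "limitin T a 0 sequentially"
  shows "compactin T (tail_sum a n k)"
  by (induction k) (simp_all add: group_topology_topspace[OF T] compactin_set_plus[OF T] compactin_sym_tail[OF T lim])

lemma openin_translate_complement:
  assumes T: "group_topology T" and K: "closedin T K"
  shows "openin T {w. x - w \<notin> K}"
proof -
  have "continuous_map T T ((\<lambda>z. x + z) \<circ> uminus)"
    using continuous_map_compose[OF group_topology_uminus[OF T] group_topology_translation[OF T]] .
  moreover have "openin T (- K)"
    using K T by (simp add: closedin_def group_topology_topspace Compl_eq_Diff_UNIV)
  ultimately have "openin T (((\<lambda>z. x + z) \<circ> uminus) -` (- K))"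
    by (rule group_topology_openin_vimage[OF T])
  then show ?thesis
    by (simp add: vimage_def)
qed

lemma ex_diagonal_dominating: "\<exists>n::nat \<Rightarrow> nat. \<forall>k i. N k i \<le> n (k + i)"
proof (intro exI allI)
  fix k i :: nat
  have "k \<in> {..k + i}"
    by simp
  then have "N k ((k + i) - k) \<in> (\<lambda>j. N j ((k + i) - j)) ` {..k + i}"
    by (rule imageI)
  then have "N k ((k + i) - k) \<le> (MAX j\<in>{..k + i}. N j ((k + i) - j))"
    by (intro Max_ge) auto
  then show "N k i \<le> (\<lambda>m. MAX j\<in>{..m}. N j (m - j)) (k + i)"
    by simp
qed

lemma seq_nbhd_subset_word_ball_plus:
  assumes "\<And>i. m i \<le> n (j + i)"
  shows "seq_nbhd a n \<subseteq> word_ball a j + seq_nbhd a m"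
proof
  fix u assume "u \<in> seq_nbhd a n"
  then obtain l where "u \<in> tail_sum a n l"
    unfolding seq_nbhd_def by blast
  then have "u \<in> tail_sum a n (j + l)"
    using tail_sum_mono[of l "j + l"] by auto
  also have "\<dots> \<subseteq> word_ball a j + tail_sum a m l"
    unfolding tail_sum_add using assms by (intro set_plus_mono2 tail_sum_subset_word_ball tail_sum_antimono)
  also have "\<dots> \<subseteq> word_ball a j + seq_nbhd a m"
    by (intro set_plus_mono2) (auto simp: seq_nbhd_def)
  finally show "u \<in> word_ball a j + seq_nbhd a m" .
qed

lemma finite_subset_word_ball:
  assumes "gen_subgroup (range a) = UNIV" and "finite F"
  shows "\<exists>j. F \<subseteq> word_ball a j"
  using assms(2)
proof (induction F rule: finite_induct)
  case (insert x F)
  then obtain j k where "F \<subseteq> word_ball a j" "x \<in> word_ball a k"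
    using ex_word_ball[OF assms(1)] by blast
  then have "insert x F \<subseteq> word_ball a (max j k)"
    using word_ball_mono[of j "max j k" a] word_ball_mono[of k "max j k" a] by auto
  then show ?case ..
qed simp

lemma precompact_in_subset_word_ball:
  assumes ts: "T_sequence a" and gen: "gen_subgroup (range a) = UNIV"
    and A: "precompact_in (seq_topology a) A"
  shows "\<exists>R. A \<subseteq> word_ball a R"
proof (rule ccontr)
  assume "\<nexists>R. A \<subseteq> word_ball a R"
  then have "\<forall>k. \<exists>y\<in>A. y \<notin> word_ball a (k + k)"
    by blast
  then obtain x where x: "\<And>k. x k \<in> A" "\<And>k. x k \<notin> word_ball a (k + k)"
    by metis
  obtain T where T: "group_topology T" "Hausdorff_space T" and lim: "limitin T a 0 sequentially"
    using ts unfolding T_sequence_def by blast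
  have "\<exists>m. seq_nbhd a m \<subseteq> {w. x k - w \<notin> word_ball a (k + k)}" for k
  proof (rule limitin_seq_nbhd_subset[OF T(1) lim])
    show "openin T {w. x k - w \<notin> word_ball a (k + k)}"
      using compactin_imp_closedin[OF T(2) compactin_tail_sum[OF T(1) lim]]
      unfolding word_ball_def by (rule openin_translate_complement[OF T(1)])
    show "0 \<in> {w. x k - w \<notin> word_ball a (k + k)}"
      using x(2) by simp
  qed
  then obtain N where N: "\<And>k. seq_nbhd a (N k) \<subseteq> {w. x k - w \<notin> word_ball a (k + k)}"
    by metis
  obtain n where n: "\<And>k i. N k i \<le> n (k + i)"
    using ex_diagonal_dominating by blast
  have "openin (seq_topology a) (seq_nbhd a n)"
    using openin_seq_topology_translate[of a 0 n] by simp
  then obtain F where "finite F" "A \<subseteq> F + seq_nbhd a n"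
    using A unfolding precompact_in_iff by auto
  moreover obtain j where "F \<subseteq> word_ball a j"
    using finite_subset_word_ball[OF gen \<open>finite F\<close>] by blast
  moreover have "seq_nbhd a n \<subseteq> word_ball a j + seq_nbhd a (N j)"
    using n by (rule seq_nbhd_subset_word_ball_plus)
  ultimately have "x j \<in> word_ball a j + (word_ball a j + seq_nbhd a (N j))"
    using x(1) by (meson set_plus_mono2 subsetD)
  then obtain b t where "x j = b + t" "b \<in> word_ball a (j + j)" "t \<in> seq_nbhd a (N j)"
    unfolding add.assoc[symmetric] word_ball_add by (auto elim: set_plus_elim)
  then show False
    using N[of j] by auto
qed

section \<open>The coarse structures\<close>

lemma ideal_coarse_eq_metric_coarse:
  fixes d :: "'a::ab_group_add \<Rightarrow> 'a \<Rightarrow> real"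
  assumes "\<And>A. A \<in> I \<Longrightarrow> \<exists>r\<ge>0. \<forall>x y. x - y \<in> A \<longrightarrow> d x y \<le> r"
    and "\<And>r. r \<ge> 0 \<Longrightarrow> \<exists>A\<in>I. \<forall>x y. d x y \<le> r \<longrightarrow> x - y \<in> A"
  shows "ideal_coarse I = metric_coarse d"
proof -
  have translate: "x \<in> (\<lambda>z. z + y) ` A \<longleftrightarrow> x - y \<in> A" for x y :: 'a and A
    by (auto intro: rev_image_eqI[of "x - y"])
  show ?thesis
    unfolding ideal_coarse_def metric_coarse_def translate
  proof (intro Collect_cong iffI conjI; elim conjE bexE exE)
    fix E A assume "A \<in> I" and E: "E \<subseteq> {(x, y). x - y \<in> A}"
    then obtain r where "r \<ge> 0" "\<forall>x y. x - y \<in> A \<longrightarrow> d x y \<le> r"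
      using assms(1) by metis
    then show "\<exists>r\<ge>0. E \<subseteq> {(x, y). d x y \<le> r}"
      using E by (intro exI[of _ r]) auto
  next
    fix E and r :: real assume "r \<ge> 0" and E: "E \<subseteq> {(x, y). d x y \<le> r}"
    then obtain A where "A \<in> I" "\<forall>x y. d x y \<le> r \<longrightarrow> x - y \<in> A"
      using assms(2) by metis
    then show "\<exists>A\<in>I. E \<subseteq> {(x, y). x - y \<in> A}"
      using E by (intro bexI[of _ A]) auto
  qed
qed

lemma asymorphic_refl: "asymorphic \<E> \<E>"
  unfolding asymorphic_def asymorphism_def macro_uniform_def
  by (intro exI[of _ id]) (auto simp: inv_id)

theorem theorem2:
  fixes a :: "nat \<Rightarrow> 'a::ab_group_add"
  assumes "T_sequence a"
    and "gen_subgroup (range a) = UNIV"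
  shows "asymorphic (ideal_coarse (precompacts (tau_seq a)))
           (metric_coarse (\<lambda>x y. real (cay_dist (range a) x y)))"
proof -
  have "ideal_coarse (precompacts (seq_topology a)) = metric_coarse (\<lambda>x y. real (cay_dist (range a) x y))"
  proof (rule ideal_coarse_eq_metric_coarse)
    fix A assume "A \<in> precompacts (seq_topology a)"
    then obtain R where "A \<subseteq> word_ball a R"
      using precompact_in_subset_word_ball[OF assms] by (auto simp: precompacts_def)
    then show "\<exists>r\<ge>0. \<forall>x y. x - y \<in> A \<longrightarrow> real (cay_dist (range a) x y) \<le> r"
      using cay_dist_le_iff[OF assms(2)] by (intro exI[of _ "real R"]) auto
  next
    fix r :: real assume "r \<ge> 0"
    have "real (cay_dist (range a) x y) \<le> r \<longleftrightarrow> cay_dist (range a) x y \<le> nat \<lfloor>r\<rfloor>" for x y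
      using \<open>r \<ge> 0\<close> by linarith
    then show "\<exists>A\<in>precompacts (seq_topology a). \<forall>x y. real (cay_dist (range a) x y) \<le> r \<longrightarrow> x - y \<in> A"
      using cay_dist_le_iff[OF assms(2)] precompact_in_word_ball
      by (intro bexI[of _ "word_ball a (nat \<lfloor>r\<rfloor>)"]) (auto simp: precompacts_def)
  qed
  then show ?thesis
    by (simp add: tau_seq_eq_seq_topology asymorphic_refl)
qed

end
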